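(* Let $I_n=[0,1]^n$ and let $C(I_n)$ denote the space of continuous real-valued functions on $I_n$. Interpretable Continuous Control Trees (ICCTs), as defined in the context, are dense in $C(I_n)$ with respect to the supremum norm. That is, for every $f\in C(I_n)$ and every $\epsilon>0$ there exists an ICCT $I:\mathbb{R}^n\to\mathbb{R}$ such that $|I(x)-f(x)|<\epsilon$ for all $x\in I_n$.
   Context: An Interpretable Continuous Control Tree (ICCT) with input $x=(x^1,\dots,x^n)\in\mathbb{R}^n$ and scalar output is a binary tree of arbitrary (finite) depth in which every internal (decision) node $i$ carries a coordinate index $k_i\in\{1,\dots,n\}$, a nonzero weight $w_i\in\mathbb{R}$, a threshold $b_i\in\mathbb{R}$ and a steepness $\alpha\neq 0$, and evaluates the crisp (Boolean) test $\mathbbm{1}(\alpha(w_i x^{k_i}-b_i)>0)$; the input is routed to the left child if the test is true and to the right child otherwise, starting from the root, until a leaf is reached. Each leaf $d$ carries an affine controller $l_d(x)=(\vec u_d\circ\vec\beta_d)^T(\vec u_d\circ x)+\vec u_d^T\vec\phi_d$, where $\vec\beta_d,\vec\phi_d\in\mathbb{R}^n$ and $\vec u_d\in\{0,1\}^n$ is a selection vector of active features (the case $\vec u_d=0$ with a constant output, i.e. a static leaf value, is allowed). The output $I(x)$ is the value $l_d(x)$ of the leaf $d$ reached by $x$. Equivalently, $I(x)=\sum_{d} l_d(x)\prod_{\text{nodes on path to }d}(\text{indicator or its complement})$, a sum over leaves of the leaf value times the product of the hard decision outcomes along the path. *)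

theory Defs
  imports "HOL-Analysis.Analysis"
begin

text \<open>Interpretable Continuous Control Trees (ICCTs) with crisp (Boolean) decision nodes.
  Inputs live in real ^ 'n (n = CARD('n)); coordinates are indexed by the type 'n.\<close>

datatype ('n::finite) icct =
    AffLeaf "real ^ 'n" "real ^ 'n" "bool ^ 'n"
      \<comment> \<open>beta, phi, selection vector u\<close>
  | ConstLeaf real
      \<comment> \<open>static leaf value (the case u = 0 with a constant output)\<close>
  | Node 'n real real "'n icct" "'n icct"
      \<comment> \<open>coordinate index k, weight w, threshold b, left, right\<close>

definition sel :: "bool \<Rightarrow> real" where "sel p = (if p then 1 else 0)"

definition leaf_ctrl :: "real ^ 'n \<Rightarrow> real ^ 'n \<Rightarrow> bool ^ 'n \<Rightarrow> real ^ 'n \<Rightarrow> real" where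
  "leaf_ctrl beta phi u x =
     (\<Sum>i\<in>UNIV. (sel (u $ i) * beta $ i) * (sel (u $ i) * x $ i)) + (\<Sum>i\<in>UNIV. sel (u $ i) * phi $ i)"

fun icct_eval :: "real \<Rightarrow> 'n::finite icct \<Rightarrow> real ^ 'n \<Rightarrow> real" where
  "icct_eval \<alpha> (AffLeaf beta phi u) x = leaf_ctrl beta phi u x"
| "icct_eval \<alpha> (ConstLeaf c) x = c"
| "icct_eval \<alpha> (Node k w b l r) x =
     (if \<alpha> * (w * x $ k - b) > 0 then icct_eval \<alpha> l x else icct_eval \<alpha> r x)"

fun icct_wf :: "'n::finite icct \<Rightarrow> bool" where
  "icct_wf (AffLeaf _ _ _) = True"
| "icct_wf (ConstLeaf _) = True"
| "icct_wf (Node k w b l r) = (w \<noteq> 0 \<and> icct_wf l \<and> icct_wf r)"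

definition unit_cube :: "(real ^ 'n) set" where
  "unit_cube = {x. \<forall>i. 0 \<le> x $ i \<and> x $ i \<le> 1}"

end

theory Submission
  imports Defs
begin

text \<open>A continuous function on the compact cube is uniformly continuous, so it is approximated
  within \<open>\<epsilon>\<close> by a step function that is constant on the cells of a fine enough grid of
  mesh \<open>1/N\<close>. Such a step function is an ICCT: for each coordinate in turn a chain of threshold
  nodes \<open>x\<^sub>k > j/N\<close> selects the grid slab containing \<open>x\<close>, and each leaf is the constant value
  of \<open>f\<close> at a corner of its cell.\<close>

fun threshold_chain :: "'n::finite \<Rightarrow> (nat \<Rightarrow> real) \<Rightarrow> nat \<Rightarrow> (nat \<Rightarrow> 'n icct) \<Rightarrow> 'n icct" where
  "threshold_chain k t 0 g = g 0"
| "threshold_chain k t (Suc m) g = Node k 1 (t (Suc m)) (g (Suc m)) (threshold_chain k t m g)"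

lemma icct_wf_threshold_chain: "(\<And>j. icct_wf (g j)) \<Longrightarrow> icct_wf (threshold_chain k t m g)"
  by (induction m) auto

lemma icct_eval_threshold_chain:
  assumes "\<alpha> > 0"
  shows "\<exists>j\<le>m. icct_eval \<alpha> (threshold_chain k t m g) x = icct_eval \<alpha> (g j) x \<and>
           (j = 0 \<or> t j < x $ k) \<and> (j = m \<or> x $ k \<le> t (Suc j))"
proof (induction m)
  case 0
  show ?case by auto
next
  case (Suc m)
  have test: "\<alpha> * (1 * x $ k - t (Suc m)) > 0 \<longleftrightarrow> t (Suc m) < x $ k"
    using assms by (simp add: zero_less_mult_iff)
  show ?case
  proof (cases "t (Suc m) < x $ k")
    case True
    then show ?thesis using test by (intro exI[of _ "Suc m"]) auto
  next
    case False
    obtain j where "j \<le> m" "icct_eval \<alpha> (threshold_chain k t m g) x = icct_eval \<alpha> (g j) x"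
      "j = 0 \<or> t j < x $ k" "j = m \<or> x $ k \<le> t (Suc j)"
      using Suc.IH by blast
    with False test show ?thesis by (intro exI[of _ j]) auto
  qed
qed

lemma grid_slab_dist:
  fixes s :: real
  assumes "N > 0" "0 \<le> s" "s \<le> 1" "j \<le> N - 1"
    and "j = 0 \<or> real j / real N < s" and "j = N - 1 \<or> s \<le> real (Suc j) / real N"
  shows "\<bar>s - real j / real N\<bar> \<le> 1 / real N"
proof -
  have "real j / real N \<le> s"
    using assms(2,5) by auto
  moreover have "s \<le> real j / real N + 1 / real N"
  proof (cases "j = N - 1")
    case True
    then have "real j / real N + 1 / real N = 1"
      using assms(1) by (simp add: field_simps of_nat_diff)
    with assms(3) show ?thesis by simp
  next
    case False
    with assms(6) show ?thesis by (simp add: add_divide_distrib)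
  qed
  ultimately show ?thesis by linarith
qed

definition grid_point :: "nat \<Rightarrow> ('n::finite \<Rightarrow> nat) \<Rightarrow> real ^ 'n" where
  "grid_point N c = (\<chi> i. real (c i) / real N)"

lemma grid_point_in_unit_cube:
  assumes "\<And>i. c i \<le> N"
  shows "grid_point N c \<in> unit_cube"
  using assms by (auto simp: unit_cube_def grid_point_def divide_le_eq_1)

text \<open>The coordinates in \<open>ks\<close> are split on; \<open>c\<close> records the grid indices chosen so far.\<close>

fun grid_tree :: "(real ^ 'n \<Rightarrow> real) \<Rightarrow> nat \<Rightarrow> 'n::finite list \<Rightarrow> ('n \<Rightarrow> nat) \<Rightarrow> 'n icct" where
  "grid_tree f N [] c = ConstLeaf (f (grid_point N c))"
| "grid_tree f N (k # ks) c =
     threshold_chain k (\<lambda>j. real j / real N) (N - 1) (\<lambda>j. grid_tree f N ks (c(k := j)))"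

lemma icct_wf_grid_tree: "icct_wf (grid_tree f N ks c)"
  by (induction ks arbitrary: c) (auto intro: icct_wf_threshold_chain)

lemma icct_eval_grid_tree:
  assumes "\<alpha> > 0" "N > 0" "x \<in> unit_cube"
  shows "\<exists>c'. icct_eval \<alpha> (grid_tree f N ks c) x = f (grid_point N c') \<and>
           (\<forall>k\<in>set ks. c' k \<le> N - 1 \<and> \<bar>x $ k - real (c' k) / real N\<bar> \<le> 1 / real N) \<and>
           (\<forall>i. i \<notin> set ks \<longrightarrow> c' i = c i)"
proof (induction ks arbitrary: c)
  case Nil
  show ?case by auto
next
  case (Cons k ks)
  obtain j where j: "j \<le> N - 1"
    "icct_eval \<alpha> (grid_tree f N (k # ks) c) x = icct_eval \<alpha> (grid_tree f N ks (c(k := j))) x"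
    "j = 0 \<or> real j / real N < x $ k" "j = N - 1 \<or> x $ k \<le> real (Suc j) / real N"
    using icct_eval_threshold_chain[OF assms(1), of "N - 1" k "\<lambda>j. real j / real N"
        "\<lambda>j. grid_tree f N ks (c(k := j))" x]
    by auto
  obtain c' where c': "icct_eval \<alpha> (grid_tree f N ks (c(k := j))) x = f (grid_point N c')"
    "\<forall>k\<in>set ks. c' k \<le> N - 1 \<and> \<bar>x $ k - real (c' k) / real N\<bar> \<le> 1 / real N"
    "\<forall>i. i \<notin> set ks \<longrightarrow> c' i = (c(k := j)) i"
    using Cons.IH by blast
  have "\<bar>x $ k - real j / real N\<bar> \<le> 1 / real N"
    using grid_slab_dist[OF assms(2) _ _ j(1,3,4)] assms(3) by (auto simp: unit_cube_def)
  with j c' show ?case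
    by (intro exI[of _ c']) (auto split: if_splits)
qed

lemma dist_le_card_mul_cart:
  fixes x y :: "real ^ 'n::finite"
  assumes "\<And>i. \<bar>x $ i - y $ i\<bar> \<le> e"
  shows "dist x y \<le> real CARD('n) * e"
proof -
  have "dist x y \<le> (\<Sum>i\<in>UNIV. \<bar>(x - y) $ i\<bar>)"
    unfolding dist_norm by (rule norm_le_l1_cart)
  also have "\<dots> \<le> (\<Sum>i\<in>(UNIV::'n set). e)"
    using assms by (intro sum_mono) simp
  finally show ?thesis by simp
qed

lemma grid_tree_approx:
  fixes x :: "real ^ 'n::finite"
  assumes "\<alpha> > 0" "N > 0" "set ks = UNIV" "x \<in> unit_cube"
  shows "\<exists>p\<in>unit_cube. icct_eval \<alpha> (grid_tree f N ks c) x = f p \<and>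
           dist p x \<le> real CARD('n) / real N"
proof -
  obtain c' where c': "icct_eval \<alpha> (grid_tree f N ks c) x = f (grid_point N c')"
    "\<And>k. c' k \<le> N - 1" "\<And>k. \<bar>x $ k - real (c' k) / real N\<bar> \<le> 1 / real N"
    using icct_eval_grid_tree[OF assms(1,2,4)] assms(3) by blast
  have "grid_point N c' \<in> unit_cube"
    using c'(2) by (intro grid_point_in_unit_cube) (meson diff_le_self le_trans)
  moreover have "dist (grid_point N c') x \<le> real CARD('n) * (1 / real N)"
  proof (rule dist_le_card_mul_cart)
    show "\<bar>grid_point N c' $ i - x $ i\<bar> \<le> 1 / real N" for i
      using c'(3)[of i] by (simp add: grid_point_def abs_minus_commute)
  qed
  ultimately show ?thesis
    using c'(1) by auto
qed

lemma compact_unit_cube: "compact (unit_cube :: (real ^ 'n::finite) set)"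
proof -
  have "unit_cube = cbox (0::real ^ 'n) 1"
    by (auto simp: unit_cube_def mem_box_cart)
  then show ?thesis
    using compact_cbox by metis
qed

theorem theorem1:
  fixes f :: "real ^ 'n::finite \<Rightarrow> real" and \<epsilon> :: real
  assumes "continuous_on unit_cube f" and "\<epsilon> > 0"
  shows "\<exists>(\<alpha>::real) (T :: 'n icct). \<alpha> \<noteq> 0 \<and> icct_wf T \<and> (\<forall>x\<in>unit_cube. \<bar>icct_eval \<alpha> T x - f x\<bar> < \<epsilon>)"
proof -
  have "uniformly_continuous_on unit_cube f"
    using assms(1) compact_unit_cube compact_uniformly_continuous by blast
  then obtain \<delta> where "\<delta> > 0"
    and \<delta>: "\<And>x y. x \<in> unit_cube \<Longrightarrow> y \<in> unit_cube \<Longrightarrow> dist y x < \<delta> \<Longrightarrow> dist (f y) (f x) < \<epsilon>"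
    unfolding uniformly_continuous_on_def using assms(2) by metis
  obtain N :: nat where N: "real CARD('n) / \<delta> < real N"
    using reals_Archimedean2 by blast
  then have "N > 0"
    using \<open>\<delta> > 0\<close> by (metis divide_nonneg_pos of_nat_0 of_nat_0_le_iff gr0I not_less)
  have mesh: "real CARD('n) / real N < \<delta>"
    using N \<open>\<delta> > 0\<close> \<open>N > 0\<close> by (simp add: field_simps)
  obtain ks :: "'n list" where ks: "set ks = UNIV"
    using finite_list[OF finite_class.finite_UNIV] by blast
  have "\<bar>icct_eval 1 (grid_tree f N ks (\<lambda>_. 0)) x - f x\<bar> < \<epsilon>" if x: "x \<in> unit_cube" for x
  proof -
    obtain p where "p \<in> unit_cube" "icct_eval 1 (grid_tree f N ks (\<lambda>_. 0)) x = f p"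
      "dist p x \<le> real CARD('n) / real N"
      using grid_tree_approx[OF zero_less_one \<open>N > 0\<close> ks x] by blast
    with \<delta>[OF x] mesh show ?thesis by (simp add: dist_real_def)
  qed
  then show ?thesis
    using icct_wf_grid_tree by (intro exI[of _ "1::real"] exI) auto
qed

end
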